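(* Let $G$ be the cycle on $n\ge 3$ vertices. Then $\mathcal{R}(G)=\frac{n(n-1)}{n^2-2n+2}$ if $n$ is even, and $\mathcal{R}(G)=\frac{n}{n-1}$ if $n$ is odd.
   Context: All graphs are finite, simple and connected, with at least two vertices; $d(u,v)$ denotes the shortest-path distance. $V_p$ denotes the set of all unordered pairs $(u,v)$ of distinct vertices. A vertex $x$ resolves the pair $(u,v)$ if $d(x,u)\neq d(x,v)$. For $(u,v)\in V_p$, $R(u,v)$ is the set of all vertices resolving $(u,v)$ (it always contains $u$ and $v$). The resolving share of a vertex $w$ for $(u,v)$ is $r_w(u,v)=\frac{1}{|R(u,v)|}$ if $w$ resolves $u$ and $v$, and $r_w(u,v)=0$ otherwise. For a vertex $w$, $R(w)$ is the set of pairs in $V_p$ resolved by $w$. The average resolving share of $w$ is $ar_w(G)=\frac{1}{|R(w)|}\sum_{(u,v)\in R(w)} r_w(u,v)$, and the resolving topological index of $G$ is $\mathcal{R}(G)=\sum_{w\in V(G)} ar_w(G)$. *)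

theory Defs
  imports Main Complex_Main
begin

definition is_walk :: "'a set \<Rightarrow> ('a \<Rightarrow> 'a \<Rightarrow> bool) \<Rightarrow> 'a list \<Rightarrow> bool" where
  "is_walk V E p \<longleftrightarrow> p \<noteq> [] \<and> set p \<subseteq> V \<and> (\<forall>i. Suc i < length p \<longrightarrow> E (p ! i) (p ! Suc i))"

definition gdist :: "'a set \<Rightarrow> ('a \<Rightarrow> 'a \<Rightarrow> bool) \<Rightarrow> 'a \<Rightarrow> 'a \<Rightarrow> nat" where
  "gdist V E u v = (LEAST k. \<exists>p. is_walk V E p \<and> hd p = u \<and> last p = v \<and> length p = Suc k)"

definition Vp :: "'a set \<Rightarrow> 'a set set" where
  "Vp V = {P. P \<subseteq> V \<and> card P = 2}"

definition resolves :: "'a set \<Rightarrow> ('a \<Rightarrow> 'a \<Rightarrow> bool) \<Rightarrow> 'a \<Rightarrow> 'a \<Rightarrow> 'a \<Rightarrow> bool" where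
  "resolves V E x u v \<longleftrightarrow> gdist V E x u \<noteq> gdist V E x v"

definition resolving_set :: "'a set \<Rightarrow> ('a \<Rightarrow> 'a \<Rightarrow> bool) \<Rightarrow> 'a \<Rightarrow> 'a \<Rightarrow> 'a set" where
  "resolving_set V E u v = {x \<in> V. resolves V E x u v}"

definition resolving_share :: "'a set \<Rightarrow> ('a \<Rightarrow> 'a \<Rightarrow> bool) \<Rightarrow> 'a \<Rightarrow> 'a \<Rightarrow> 'a \<Rightarrow> real" where
  "resolving_share V E w u v =
     (if resolves V E w u v then 1 / real (card (resolving_set V E u v)) else 0)"

definition resolved_pairs :: "'a set \<Rightarrow> ('a \<Rightarrow> 'a \<Rightarrow> bool) \<Rightarrow> 'a \<Rightarrow> 'a set set" where
  "resolved_pairs V E w = {P \<in> Vp V. \<exists>u v. P = {u, v} \<and> resolves V E w u v}"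

definition avg_resolving_share :: "'a set \<Rightarrow> ('a \<Rightarrow> 'a \<Rightarrow> bool) \<Rightarrow> 'a \<Rightarrow> real" where
  "avg_resolving_share V E w =
     (1 / real (card (resolved_pairs V E w))) *
     (\<Sum>P\<in>resolved_pairs V E w. (THE r. \<exists>u v. P = {u, v} \<and> r = resolving_share V E w u v))"

definition resolving_index :: "'a set \<Rightarrow> ('a \<Rightarrow> 'a \<Rightarrow> bool) \<Rightarrow> real" where
  "resolving_index V E = (\<Sum>w\<in>V. avg_resolving_share V E w)"

definition cycle_adj :: "nat \<Rightarrow> nat \<Rightarrow> nat \<Rightarrow> bool" where
  "cycle_adj n i j \<longleftrightarrow> i < n \<and> j < n \<and> (j = (i + 1) mod n \<or> i = (j + 1) mod n)"

end

theory Submission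
  imports Defs
begin

text \<open>On the cycle the distance between vertices is the cyclic distance of their labels, so a
  vertex \<open>x\<close> fails to resolve a pair \<open>u \<noteq> v\<close> exactly when \<open>2x \<equiv> u + v (mod n)\<close>.
  For odd \<open>n\<close> this congruence has exactly one solution, so every resolved pair has resolving
  set of size \<open>n - 1\<close> and every average share is \<open>1/(n - 1)\<close>. For \<open>n = 2h\<close> it has no
  solution when \<open>u + v\<close> is odd and two when \<open>u + v\<close> is even; a fixed vertex resolves all
  \<open>nh\<close> ordered pairs of the first kind (share \<open>1/n\<close>) and \<open>n(h - 2) + 2\<close> of the second
  (share \<open>1/(n - 2)\<close>), which gives the average share \<open>(n - 1)/(n\<^sup>2 - 2n + 2)\<close>.\<close>

definition resolved_ordered_pairs :: "'a set \<Rightarrow> ('a \<Rightarrow> 'a \<Rightarrow> bool) \<Rightarrow> 'a \<Rightarrow> ('a \<times> 'a) set" where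
  "resolved_ordered_pairs V E w = {(u, v). u \<in> V \<and> v \<in> V \<and> resolves V E w u v}"

lemma sum_ordered_pairs_eq_double:
  fixes g :: "'a \<Rightarrow> 'a \<Rightarrow> real"
  assumes fin: "finite V" and R_sym: "\<And>u v. R u v = R v u" and R_irrefl: "\<And>u. \<not> R u u"
    and g_sym: "\<And>u v. g u v = g v u"
  shows "(\<Sum>(u, v)\<in>{(u, v). u \<in> V \<and> v \<in> V \<and> R u v}. g u v) =
         2 * (\<Sum>P\<in>{P \<in> Vp V. \<exists>u v. P = {u, v} \<and> R u v}. THE r. \<exists>u v. P = {u, v} \<and> r = g u v)"
proof -
  define T where "T = {(u, v). u \<in> V \<and> v \<in> V \<and> R u v}"
  define Q where "Q = {P \<in> Vp V. \<exists>u v. P = {u, v} \<and> R u v}"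
  define pair where "pair = (\<lambda>(u, v). {u, v} :: 'a set)"
  have "finite T" unfolding T_def by (rule finite_subset[of _ "V \<times> V"]) (use fin in auto)
  have "pair ` T = Q"
  proof (intro set_eqI iffI)
    fix P assume "P \<in> pair ` T"
    then show "P \<in> Q" using R_irrefl unfolding T_def Q_def pair_def Vp_def by (force simp: card_2_iff)
  next
    fix P assume "P \<in> Q"
    then obtain u v where "P = {u, v}" "R u v" "u \<in> V" "v \<in> V" unfolding Q_def Vp_def by auto
    then show "P \<in> pair ` T" unfolding T_def pair_def by force
  qed
  moreover have "(\<Sum>(u, v)\<in>{x \<in> T. pair x = P}. g u v) = 2 * (THE r. \<exists>u v. P = {u, v} \<and> r = g u v)"
    if "P \<in> Q" for P
  proof -
    obtain a b where ab: "P = {a, b}" "R a b" "a \<in> V" "b \<in> V"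
      using \<open>P \<in> Q\<close> unfolding Q_def Vp_def by auto
    then have "a \<noteq> b" using R_irrefl by auto
    have "{x \<in> T. pair x = P} = {(a, b), (b, a)}"
      using ab R_sym unfolding T_def pair_def by (auto simp: doubleton_eq_iff)
    moreover have "(THE r. \<exists>u v. P = {u, v} \<and> r = g u v) = g a b"
      using ab g_sym by (intro the_equality) (auto simp: doubleton_eq_iff)
    ultimately show ?thesis using \<open>a \<noteq> b\<close> g_sym by simp
  qed
  ultimately have "(\<Sum>(u, v)\<in>T. g u v) = (\<Sum>P\<in>Q. 2 * (THE r. \<exists>u v. P = {u, v} \<and> r = g u v))"
    using sum.image_gen[OF \<open>finite T\<close>, of "\<lambda>(u, v). g u v" pair] by simp
  then show ?thesis unfolding T_def Q_def by (simp add: sum_distrib_left)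
qed

lemma avg_resolving_share_eq:
  assumes "finite V"
  shows "avg_resolving_share V E w =
           (\<Sum>(u, v)\<in>resolved_ordered_pairs V E w. resolving_share V E w u v) /
           card (resolved_ordered_pairs V E w)"
proof -
  define Q where "Q = resolved_pairs V E w"
  have resolves_sym: "resolves V E x u v = resolves V E x v u" for x u v
    unfolding resolves_def by auto
  have irrefl: "\<not> resolves V E w u u" for u
    unfolding resolves_def by auto
  have "resolving_set V E u v = resolving_set V E v u" for u v
    unfolding resolving_set_def using resolves_sym by blast
  then have share_sym: "resolving_share V E w u v = resolving_share V E w v u" for u v
    unfolding resolving_share_def using resolves_sym by presburger
  have sum_eq: "(\<Sum>(u, v)\<in>resolved_ordered_pairs V E w. resolving_share V E w u v) =
      2 * (\<Sum>P\<in>Q. THE r. \<exists>u v. P = {u, v} \<and> r = resolving_share V E w u v)"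
    unfolding resolved_ordered_pairs_def Q_def resolved_pairs_def
    by (rule sum_ordered_pairs_eq_double[OF assms]) (use resolves_sym irrefl share_sym in auto)
  have "(\<Sum>(u, v)\<in>resolved_ordered_pairs V E w. 1 :: real) =
      2 * (\<Sum>P\<in>Q. THE r. \<exists>u v. P = {u, v} \<and> r = (1 :: real))"
    unfolding resolved_ordered_pairs_def Q_def resolved_pairs_def
    by (rule sum_ordered_pairs_eq_double[OF assms]) (use resolves_sym irrefl in auto)
  also have "(\<Sum>P\<in>Q. THE r. \<exists>u v. P = {u, v} \<and> r = (1 :: real)) = (\<Sum>P\<in>Q. 1)"
    by (rule sum.cong) (auto simp: Q_def resolved_pairs_def intro!: the_equality)
  finally have "card (resolved_ordered_pairs V E w) = 2 * card Q" by simp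
  then show ?thesis unfolding avg_resolving_share_def Q_def[symmetric] sum_eq by simp
qed

definition cyclic_dist :: "nat \<Rightarrow> int \<Rightarrow> int" where
  "cyclic_dist n a = min (a mod int n) ((- a) mod int n)"

lemma cyclic_dist_mod_cong: "a mod int n = b mod int n \<Longrightarrow> cyclic_dist n a = cyclic_dist n b"
  unfolding cyclic_dist_def by (metis mod_minus_cong)

lemma cyclic_dist_uminus: "cyclic_dist n (- a) = cyclic_dist n a"
  unfolding cyclic_dist_def by (simp add: min.commute)

lemma cyclic_dist_nonneg: "n > 0 \<Longrightarrow> 0 \<le> cyclic_dist n a"
  unfolding cyclic_dist_def by simp

lemma cyclic_dist_eq_if:
  "n > 0 \<Longrightarrow> cyclic_dist n a =
     (if a mod int n = 0 then 0 else min (a mod int n) (int n - a mod int n))"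
  unfolding cyclic_dist_def by (simp add: zmod_zminus1_eq_if)

lemma mod_eq_if_less_double:
  fixes t m :: int
  assumes "0 \<le> t" "t < 2 * m"
  shows "t mod m = (if t < m then t else t - m)"
proof (cases "t < m")
  case False
  have "t mod m = (t - m) mod m" by (simp add: mod_diff_right_eq[symmetric])
  also have "\<dots> = t - m" using assms False by (intro mod_pos_pos_trivial) auto
  finally show ?thesis using False by simp
qed (use assms in simp)

lemma cyclic_dist_add1_le: "n > 0 \<Longrightarrow> cyclic_dist n (a + 1) \<le> cyclic_dist n a + 1"
proof -
  assume n: "n > 0"
  define r where "r = a mod int n"
  have r: "0 \<le> r" "r < int n" using n by (auto simp: r_def)
  have "(a + 1) mod int n = (r + 1) mod int n" by (simp add: r_def mod_add_left_eq)
  also have "\<dots> = (if r + 1 < int n then r + 1 else r + 1 - int n)"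
    using r by (intro mod_eq_if_less_double) auto
  finally show ?thesis using cyclic_dist_eq_if[OF n, of a] cyclic_dist_eq_if[OF n, of "a + 1"] r
    unfolding r_def[symmetric] by auto
qed

lemma cyclic_dist_diff1_le: "n > 0 \<Longrightarrow> cyclic_dist n (a - 1) \<le> cyclic_dist n a + 1"
  using cyclic_dist_add1_le[of n "- a"] cyclic_dist_uminus[of n a] cyclic_dist_uminus[of n "a - 1"]
  by simp

lemma cyclic_dist_step:
  assumes n: "n > 0"
  shows "cyclic_dist n (l - int a) \<le> cyclic_dist n (l - int ((a + 1) mod n)) + 1"
    and "cyclic_dist n (l - int ((a + 1) mod n)) \<le> cyclic_dist n (l - int a) + 1"
proof -
  have "(l - int ((a + 1) mod n)) mod int n = (l - int a - 1) mod int n"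
    by (simp add: of_nat_mod mod_diff_right_eq algebra_simps)
  then have eq: "cyclic_dist n (l - int ((a + 1) mod n)) = cyclic_dist n (l - int a - 1)"
    by (rule cyclic_dist_mod_cong)
  show "cyclic_dist n (l - int a) \<le> cyclic_dist n (l - int ((a + 1) mod n)) + 1"
    unfolding eq using cyclic_dist_add1_le[OF n, of "l - int a - 1"] by simp
  show "cyclic_dist n (l - int ((a + 1) mod n)) \<le> cyclic_dist n (l - int a) + 1"
    unfolding eq using cyclic_dist_diff1_le[OF n, of "l - int a"] by simp
qed

lemma cyclic_dist_le_walk_length:
  assumes "is_walk {0..<n} (cycle_adj n) p" "n > 0"
  shows "cyclic_dist n (int (last p) - int (hd p)) \<le> int (length p) - 1"
  using assms(1)
proof (induction p)
  case Nil then show ?case by (simp add: is_walk_def)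
next
  case (Cons a q)
  show ?case
  proof (cases "q = []")
    case True then show ?thesis by (simp add: cyclic_dist_def)
  next
    case False
    have "is_walk {0..<n} (cycle_adj n) q"
      using Cons.prems False unfolding is_walk_def by (auto simp del: nth_Cons_Suc)
    then have IH: "cyclic_dist n (int (last q) - int (hd q)) \<le> int (length q) - 1"
      by (rule Cons.IH)
    have "cycle_adj n a (hd q)"
      using Cons.prems False unfolding is_walk_def
      by (metis hd_conv_nth length_Cons length_greater_0_conv lessI nth_Cons_0 nth_Cons_Suc Suc_less_eq)
    then have "cyclic_dist n (int (last q) - int a) \<le> cyclic_dist n (int (last q) - int (hd q)) + 1"
      unfolding cycle_adj_def using cyclic_dist_step[OF assms(2)] by auto
    then show ?thesis using IH False by simp
  qed
qed

lemma is_walk_cycle_mapI: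
  assumes "\<And>i. i \<le> k \<Longrightarrow> f i < n" "\<And>i. i < k \<Longrightarrow> cycle_adj n (f i) (f (Suc i))"
  shows "is_walk {0..<n} (cycle_adj n) (map f [0..<Suc k])"
  unfolding is_walk_def using assms
  by (auto simp del: upt_Suc simp: nth_append less_Suc_eq_le)

lemma is_walk_cycle_forward:
  assumes "n > 0" "u < n"
  shows "is_walk {0..<n} (cycle_adj n) (map (\<lambda>i. (u + i) mod n) [0..<Suc k])"
  by (rule is_walk_cycle_mapI) (use assms in \<open>auto simp: cycle_adj_def mod_Suc_eq\<close>)

lemma is_walk_cycle_backward:
  assumes "n > 0" "u < n"
  shows "is_walk {0..<n} (cycle_adj n) (map (\<lambda>i. nat ((int u - int i) mod int n)) [0..<Suc k])"
proof (rule is_walk_cycle_mapI)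
  fix i
  show "nat ((int u - int i) mod int n) < n" using assms by (simp add: nat_less_iff)
  define b where "b = nat ((int u - int (Suc i)) mod int n)"
  have "int ((b + 1) mod n) = ((int u - int (Suc i)) mod int n + 1) mod int n"
    using assms by (simp add: b_def of_nat_mod add.commute)
  also have "\<dots> = (int u - int i) mod int n" by (simp add: mod_add_left_eq)
  finally have "nat ((int u - int i) mod int n) = (b + 1) mod n" by (metis nat_int)
  then show "cycle_adj n (nat ((int u - int i) mod int n)) (nat ((int u - int (Suc i)) mod int n))"
    unfolding cycle_adj_def b_def using assms by (simp add: nat_less_iff)
qed

lemma gdist_cycle:
  assumes n: "n > 0" and u: "u < n" and v: "v < n"
  shows "gdist {0..<n} (cycle_adj n) u v = nat (cyclic_dist n (int v - int u))"
  unfolding gdist_def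
proof (rule Least_equality)
  show "\<exists>p. is_walk {0..<n} (cycle_adj n) p \<and> hd p = u \<and> last p = v \<and>
        length p = Suc (nat (cyclic_dist n (int v - int u)))"
  proof (cases "(int v - int u) mod int n \<le> (int u - int v) mod int n")
    case True
    define k where "k = nat ((int v - int u) mod int n)"
    have "int ((u + k) mod n) = (int u + (int v - int u) mod int n) mod int n"
      using n by (simp add: k_def of_nat_mod)
    also have "\<dots> = int v" using v by (simp add: mod_add_right_eq)
    finally have "(u + k) mod n = v" by simp
    moreover have "nat (cyclic_dist n (int v - int u)) = k"
      using True unfolding k_def cyclic_dist_def by simp
    ultimately show ?thesis
      using is_walk_cycle_forward[OF n u, of k] u
      by (intro exI[of _ "map (\<lambda>i. (u + i) mod n) [0..<Suc k]"]) (simp del: upt_Suc add: hd_map last_map)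
  next
    case False
    define k where "k = nat ((int u - int v) mod int n)"
    have "(int u - int k) mod int n = (int u - (int u - int v) mod int n) mod int n"
      using n by (simp add: k_def)
    also have "\<dots> = int v" using v by (simp add: mod_diff_right_eq)
    finally have "nat ((int u - int k) mod int n) = v" by simp
    moreover have "nat (cyclic_dist n (int v - int u)) = k"
      using False unfolding k_def cyclic_dist_def by simp
    ultimately show ?thesis
      using is_walk_cycle_backward[OF n u, of k] u
      by (intro exI[of _ "map (\<lambda>i. nat ((int u - int i) mod int n)) [0..<Suc k]"])
        (simp del: upt_Suc add: hd_map last_map)
  qed
next
  fix l
  assume "\<exists>p. is_walk {0..<n} (cycle_adj n) p \<and> hd p = u \<and> last p = v \<and> length p = Suc l"
  then show "nat (cyclic_dist n (int v - int u)) \<le> l"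
    using cyclic_dist_le_walk_length[OF _ n] by fastforce
qed

definition cycle_midpoints :: "nat \<Rightarrow> int \<Rightarrow> nat set" where
  "cycle_midpoints n a = {x. x < n \<and> int n dvd (a - 2 * int x)}"

lemma cyclic_dist_eq_iff:
  assumes n: "n > 0" and u: "u < n" and v: "v < n"
  shows "cyclic_dist n (int u - int x) = cyclic_dist n (int v - int x) \<longleftrightarrow>
           u = v \<or> int n dvd (int u + int v - 2 * int x)"
proof -
  define r where "r = (int u - int x) mod int n"
  define s where "s = (int v - int x) mod int n"
  have r: "0 \<le> r" "r < int n" and s: "0 \<le> s" "s < int n" using n by (auto simp: r_def s_def)
  have "cyclic_dist n (int u - int x) = cyclic_dist n (int v - int x) \<longleftrightarrow> r = s \<or> r + s = int n"
    using cyclic_dist_eq_if[OF n, of "int u - int x"] cyclic_dist_eq_if[OF n, of "int v - int x"] r s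
    unfolding r_def[symmetric] s_def[symmetric] by auto
  moreover have "r = s \<longleftrightarrow> u = v"
  proof
    assume "r = s"
    then have "((int u - int x) + int x) mod int n = ((int v - int x) + int x) mod int n"
      unfolding r_def s_def by (metis mod_add_left_eq)
    then show "u = v" using u v by simp
  qed (simp add: r_def s_def)
  moreover have "(int u + int v - 2 * int x) mod int n = (r + s) mod int n"
    unfolding r_def s_def by (simp add: mod_add_eq algebra_simps)
  moreover have "(r + s) mod int n = (if r + s < int n then r + s else r + s - int n)"
    using r s by (intro mod_eq_if_less_double) auto
  ultimately show ?thesis using r s by (auto simp: dvd_eq_mod_eq_0)
qed

lemma resolves_cycle_iff:
  assumes n: "n > 0" and x: "x < n" and u: "u < n" and v: "v < n"
  shows "resolves {0..<n} (cycle_adj n) x u v \<longleftrightarrow>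
           u \<noteq> v \<and> x \<notin> cycle_midpoints n (int u + int v)"
proof -
  have "resolves {0..<n} (cycle_adj n) x u v \<longleftrightarrow>
          cyclic_dist n (int u - int x) \<noteq> cyclic_dist n (int v - int x)"
    unfolding resolves_def gdist_cycle[OF n x u] gdist_cycle[OF n x v]
    using cyclic_dist_nonneg[OF n] by (metis eq_nat_nat_iff)
  then show ?thesis using cyclic_dist_eq_iff[OF n u v] x by (simp add: cycle_midpoints_def)
qed

lemma resolving_set_cycle:
  assumes "n > 0" "u < n" "v < n" "u \<noteq> v"
  shows "resolving_set {0..<n} (cycle_adj n) u v = {0..<n} - cycle_midpoints n (int u + int v)"
  unfolding resolving_set_def using resolves_cycle_iff[OF assms(1) _ assms(2,3)] assms(4) by auto

lemma card_resolving_set_cycle: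
  assumes "n > 0" "u < n" "v < n" "u \<noteq> v"
  shows "card (resolving_set {0..<n} (cycle_adj n) u v) = n - card (cycle_midpoints n (int u + int v))"
  unfolding resolving_set_cycle[OF assms]
  by (subst card_Diff_subset) (auto simp: cycle_midpoints_def)

lemma eq_if_dvd_diff_less:
  fixes x y n :: nat
  assumes "x < n" "y < n" "int n dvd (int x - int y)"
  shows "x = y"
  using assms by (simp add: mod_eq_dvd_iff[symmetric])

lemma card_cycle_midpoints_odd:
  assumes "odd n"
  shows "card (cycle_midpoints n a) = 1"
proof -
  have n: "n > 0" using assms by (cases n) auto
  define k where "k = (int n + 1) div 2" \<comment> \<open>the inverse of 2 modulo \<open>n\<close>\<close>
  have k: "2 * k = int n + 1" unfolding k_def using assms by (intro dvd_mult_div_cancel) simp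
  define x0 where "x0 = nat ((a * k) mod int n)"
  have x0: "x0 < n" "int x0 = (a * k) mod int n" using n by (simp_all add: x0_def nat_less_iff)
  have "int n dvd a * k - (a * k) mod int n" by (simp add: minus_mod_eq_mult_div)
  then have "int n dvd 2 * (a * k - (a * k) mod int n) - a * int n"
    by (rule dvd_diff[OF dvd_mult dvd_triv_right])
  moreover have "2 * (a * k - (a * k) mod int n) - a * int n = a - 2 * int x0"
    using k x0(2) by (simp add: algebra_simps)
  ultimately have x0_dvd: "int n dvd (a - 2 * int x0)" by simp
  have "cycle_midpoints n a = {x0}"
  proof (intro set_eqI iffI)
    fix x assume "x \<in> cycle_midpoints n a"
    then have x: "x < n" "int n dvd (a - 2 * int x)" by (auto simp: cycle_midpoints_def)
    have "int n dvd (a - 2 * int x0) - (a - 2 * int x)" using x0_dvd x(2) by (rule dvd_diff)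
    then have "int n dvd 2 * (int x - int x0)" by (simp add: algebra_simps)
    then have "int n dvd (int x - int x0)"
      using coprime_dvd_mult_right_iff[of "int n" 2 "int x - int x0"] assms by simp
    then show "x \<in> {x0}" using eq_if_dvd_diff_less[OF x(1) x0(1)] by simp
  qed (use x0 x0_dvd in \<open>auto simp: cycle_midpoints_def\<close>)
  then show ?thesis by simp
qed

lemma cycle_midpoints_odd_sum:
  assumes "even n" "odd (u + v)"
  shows "cycle_midpoints n (int u + int v) = {}"
proof -
  have "\<not> int n dvd (int u + int v - 2 * int x)" for x
  proof
    assume "int n dvd (int u + int v - 2 * int x)"
    moreover have "2 dvd int n" using assms(1) by simp
    ultimately have "2 dvd (int u + int v - 2 * int x)" by (rule dvd_trans[rotated])
    then show False using assms(2) by (simp flip: of_nat_add)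
  qed
  then show ?thesis by (auto simp: cycle_midpoints_def)
qed

lemma cycle_midpoints_even_even:
  assumes "n = 2 * h" "h > 0"
  shows "cycle_midpoints n (2 * int m) = {m mod h, m mod h + h}"
proof -
  have iff: "int n dvd (2 * int m - 2 * int x) \<longleftrightarrow> x mod h = m mod h" for x
  proof -
    have "int n dvd (2 * int m - 2 * int x) \<longleftrightarrow> 2 * int h dvd 2 * (int m - int x)"
      using assms by (simp add: algebra_simps)
    also have "\<dots> \<longleftrightarrow> int h dvd (int m - int x)" by (metis dvd_mult_cancel_left zero_neq_numeral)
    also have "\<dots> \<longleftrightarrow> int m mod int h = int x mod int h" by (simp add: mod_eq_dvd_iff)
    also have "\<dots> \<longleftrightarrow> x mod h = m mod h" by (auto simp flip: of_nat_mod)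
    finally show ?thesis .
  qed
  have "x < 2 * h \<and> x mod h = m mod h \<longleftrightarrow> x = m mod h \<or> x = m mod h + h" for x
  proof
    assume x: "x < 2 * h \<and> x mod h = m mod h"
    then have "x div h < 2" by (simp add: div_less_iff_less_mult mult.commute)
    then have "x div h = 0 \<or> x div h = 1" by linarith
    then show "x = m mod h \<or> x = m mod h + h"
      using x div_mod_decomp[of x h] by auto
  next
    assume x: "x = m mod h \<or> x = m mod h + h"
    have "m mod h < h" using assms(2) by simp
    then show "x < 2 * h \<and> x mod h = m mod h" using x by auto
  qed
  then show ?thesis unfolding cycle_midpoints_def iff unfolding assms(1) by blast
qed

lemma card_cycle_midpoints_even_even:
  assumes "n = 2 * h" "h > 0"
  shows "card (cycle_midpoints n (2 * int m)) = 2"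
  unfolding cycle_midpoints_even_even[OF assms] using assms(2) by simp

lemma resolving_share_cycle:
  assumes "n > 0" "w < n" "u < n" "v < n" "resolves {0..<n} (cycle_adj n) w u v"
  shows "resolving_share {0..<n} (cycle_adj n) w u v =
           1 / (real n - real (card (cycle_midpoints n (int u + int v))))"
proof -
  have "u \<noteq> v" using assms(5) by (auto simp: resolves_def)
  have "cycle_midpoints n (int u + int v) \<subseteq> {0..<n}"
    by (auto simp: cycle_midpoints_def)
  then have "card (cycle_midpoints n (int u + int v)) \<le> n"
    using card_mono[OF finite_atLeastLessThan] by (metis card_atLeastLessThan diff_zero)
  moreover have "card (resolving_set {0..<n} (cycle_adj n) u v) =
      n - card (cycle_midpoints n (int u + int v))"
    by (rule card_resolving_set_cycle[OF assms(1,3,4) \<open>u \<noteq> v\<close>])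
  ultimately show ?thesis
    unfolding resolving_share_def using assms(5) by (simp add: of_nat_diff)
qed

lemma avg_resolving_share_cycle_odd:
  assumes "odd n" "n \<ge> 3" "w < n"
  shows "avg_resolving_share {0..<n} (cycle_adj n) w = 1 / (real n - 1)"
proof -
  define T where "T = resolved_ordered_pairs {0..<n} (cycle_adj n) w"
  have n: "n > 0" using assms(2) by simp
  have share: "resolving_share {0..<n} (cycle_adj n) w u v = 1 / (real n - 1)" if "(u, v) \<in> T" for u v
    using that resolving_share_cycle[OF n assms(3)] card_cycle_midpoints_odd[OF assms(1)]
    unfolding T_def resolved_ordered_pairs_def by auto
  define v where "v = (if w = 0 then 1 else 0 :: nat)"
  have "v < n" "v \<noteq> w" using assms(2) by (auto simp: v_def)
  then have "w \<notin> cycle_midpoints n (int w + int v)"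
    using eq_if_dvd_diff_less[OF \<open>v < n\<close> assms(3)] by (auto simp: cycle_midpoints_def)
  then have "resolves {0..<n} (cycle_adj n) w w v"
    using resolves_cycle_iff[OF n assms(3,3) \<open>v < n\<close>] \<open>v \<noteq> w\<close> by simp
  then have "(w, v) \<in> T"
    using \<open>v < n\<close> assms(3) unfolding T_def resolved_ordered_pairs_def by simp
  moreover have "finite T" unfolding T_def resolved_ordered_pairs_def
    by (rule finite_subset[of _ "{0..<n} \<times> {0..<n}"]) auto
  ultimately have "card T \<noteq> 0" by auto
  then show ?thesis
    unfolding avg_resolving_share_eq[OF finite_atLeastLessThan] T_def[symmetric]
    using share by (simp add: case_prod_beta)
qed

lemma card_parity_class: "card {v. v < 2 * h \<and> even v = b} = h"
proof -
  have "{v. v < 2 * h \<and> even v = b} = (\<lambda>k. 2 * k + (if b then 0 else 1)) ` {..<h}"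
    by (cases b) (auto elim: evenE oddE)
  then show ?thesis by (simp add: card_image inj_on_def)
qed

lemma card_residue_class:
  assumes "n > 0"
  shows "card {v. v < n \<and> int n dvd (int v - b)} = 1"
proof -
  have "v < n \<and> int n dvd (int v - b) \<longleftrightarrow> v = nat (b mod int n)" for v
  proof -
    have "v < n \<and> int n dvd (int v - b) \<longleftrightarrow> v < n \<and> int v mod int n = b mod int n"
      by (simp add: mod_eq_dvd_iff)
    also have "\<dots> \<longleftrightarrow> v = nat (b mod int n)"
      using assms by (auto simp: nat_less_iff)
    finally show ?thesis .
  qed
  then show ?thesis by simp
qed

lemma card_cycle_midpoint_pairs:
  assumes "n > 0" "w < n"
  shows "card {(u, v). u < n \<and> v < n \<and> w \<in> cycle_midpoints n (int u + int v)} = n"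
proof -
  have "{(u, v). u < n \<and> v < n \<and> w \<in> cycle_midpoints n (int u + int v)} =
      Sigma {..<n} (\<lambda>u. {v. v < n \<and> int n dvd (int v - (2 * int w - int u))})"
    using assms(2) by (auto simp: cycle_midpoints_def algebra_simps)
  then show ?thesis using card_residue_class[OF assms(1)] by simp
qed

lemma card_cycle_midpoint_pairs_distinct:
  assumes "n = 2 * h" "h > 0" "w < n"
  shows "card {(u, v). u < n \<and> v < n \<and> u \<noteq> v \<and> w \<in> cycle_midpoints n (int u + int v)} = n - 2"
proof -
  define M where "M = {(u, v). u < n \<and> v < n \<and> w \<in> cycle_midpoints n (int u + int v)}"
  define D where "D = (\<lambda>u. (u, u)) ` cycle_midpoints n (2 * int w)"
  have diag: "(u, u) \<in> M \<longleftrightarrow> (u, u) \<in> D" for u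
  proof -
    have "int n dvd int u + int u - 2 * int w \<longleftrightarrow> int n dvd 2 * int w - 2 * int u"
      by (subst dvd_diff_commute) simp
    then show ?thesis using assms(3) by (auto simp: M_def D_def cycle_midpoints_def)
  qed
  have D_diag: "x \<in> D \<Longrightarrow> fst x = snd x" for x by (auto simp: D_def)
  have "D \<subseteq> M" using diag D_diag by (metis prod.collapse subsetI)
  have "{(u, v). u < n \<and> v < n \<and> u \<noteq> v \<and> w \<in> cycle_midpoints n (int u + int v)} =
      {x \<in> M. fst x \<noteq> snd x}"
    by (auto simp: M_def)
  also have "\<dots> = M - D"
  proof (intro set_eqI)
    fix x :: "nat \<times> nat"
    obtain u v where x: "x = (u, v)" by fastforce
    show "x \<in> {x \<in> M. fst x \<noteq> snd x} \<longleftrightarrow> x \<in> M - D"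
      using diag[of u] D_diag[of x] unfolding x by (cases "u = v") auto
  qed
  finally have eq: "{(u, v). u < n \<and> v < n \<and> u \<noteq> v \<and> w \<in> cycle_midpoints n (int u + int v)} = M - D" .
  have "card D = 2"
    unfolding D_def using card_cycle_midpoints_even_even[OF assms(1,2)]
    by (simp add: card_image inj_on_def)
  moreover have "finite M" unfolding M_def
    by (rule finite_subset[of _ "{..<n} \<times> {..<n}"]) auto
  moreover have "card M = n"
    unfolding M_def using assms by (intro card_cycle_midpoint_pairs) auto
  ultimately show ?thesis
    unfolding eq using card_Diff_subset[OF finite_subset \<open>D \<subseteq> M\<close>] \<open>D \<subseteq> M\<close> by simp
qed

lemma card_same_parity_pairs:
  "card {(u, v). u < 2 * h \<and> v < 2 * h \<and> u \<noteq> v \<and> even (u + v)} = 2 * h * (h - 1)"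
proof -
  have "{(u, v). u < 2 * h \<and> v < 2 * h \<and> u \<noteq> v \<and> even (u + v)} =
      Sigma {..<2 * h} (\<lambda>u. {v. v < 2 * h \<and> even v = even u} - {u})"
    by auto
  moreover have "card ({v. v < 2 * h \<and> even v = even u} - {u}) = h - 1" if "u < 2 * h" for u
    using that card_parity_class[of h "even u"] by (simp add: card_Diff_singleton)
  ultimately show ?thesis by simp
qed

lemma card_opposite_parity_pairs:
  "card {(u, v). u < 2 * h \<and> v < 2 * h \<and> odd (u + v)} = 2 * h * h"
proof -
  have "{(u, v). u < 2 * h \<and> v < 2 * h \<and> odd (u + v)} =
      Sigma {..<2 * h} (\<lambda>u. {v. v < 2 * h \<and> even v = odd u})"
    by auto
  then show ?thesis using card_parity_class[of h] by simp
qed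

lemma resolving_share_cycle_even:
  assumes n: "n = 2 * h" "h > 0" and "w < n" "u < n" "v < n"
    and "resolves {0..<n} (cycle_adj n) w u v"
  shows "resolving_share {0..<n} (cycle_adj n) w u v =
           (if odd (u + v) then 1 / real n else 1 / (real n - 2))"
proof (cases "odd (u + v)")
  case True
  then show ?thesis using resolving_share_cycle[OF _ assms(3-6)] cycle_midpoints_odd_sum[of n u v] n
    by simp
next
  case False
  then have "u + v = 2 * ((u + v) div 2)" by simp
  then have "int u + int v = 2 * int ((u + v) div 2)" by (metis of_nat_add of_nat_mult of_nat_numeral)
  then show ?thesis using resolving_share_cycle[OF _ assms(3-6)] card_cycle_midpoints_even_even[OF n] n False
    by simp
qed

lemma card_same_parity_non_midpoint_pairs:
  assumes n: "n = 2 * h" and h: "h \<ge> 2" and w: "w < n"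
  shows "real (card {(u, v). u < n \<and> v < n \<and> u \<noteq> v \<and> even (u + v) \<and>
                             w \<notin> cycle_midpoints n (int u + int v)}) = real n * (real h - 2) + 2"
proof -
  define Same where "Same = {(u, v). u < n \<and> v < n \<and> u \<noteq> v \<and> even (u + v)}"
  define Mid where "Mid = {(u, v). u < n \<and> v < n \<and> u \<noteq> v \<and> w \<in> cycle_midpoints n (int u + int v)}"
  have "even n" using n by simp
  have Mid_Same: "Mid \<subseteq> Same"
    using cycle_midpoints_odd_sum[OF \<open>even n\<close>] by (auto simp: Mid_def Same_def)
  have "finite Same"
    by (rule finite_subset[of _ "{..<n} \<times> {..<n}"]) (auto simp: Same_def)
  have "card Same = 2 * h * (h - 1)"
    unfolding Same_def n by (rule card_same_parity_pairs)
  moreover have "card Mid = n - 2"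
    unfolding Mid_def using h by (intro card_cycle_midpoint_pairs_distinct[OF n _ w]) simp
  moreover have "card (Same - Mid) + card Mid = card Same"
    using card_Diff_subset[OF finite_subset[OF Mid_Same \<open>finite Same\<close>] Mid_Same]
      card_mono[OF \<open>finite Same\<close> Mid_Same] by simp
  ultimately have "real (card (Same - Mid) + (n - 2)) = real (2 * h * (h - 1))" by simp
  then have "real (card (Same - Mid)) + (real n - 2) = 2 * real h * (real h - 1)"
    using h n by (simp add: of_nat_diff)
  moreover have "Same - Mid = {(u, v). u < n \<and> v < n \<and> u \<noteq> v \<and> even (u + v) \<and>
                                      w \<notin> cycle_midpoints n (int u + int v)}"
    by (auto simp: Same_def Mid_def)
  ultimately show ?thesis using n by (simp add: algebra_simps)
qed

lemma avg_resolving_share_cycle_even: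
  assumes n: "n = 2 * h" and h: "h \<ge> 2" and w: "w < n"
  shows "avg_resolving_share {0..<n} (cycle_adj n) w = (real n - 1) / ((real n)\<^sup>2 - 2 * real n + 2)"
proof -
  define T where "T = resolved_ordered_pairs {0..<n} (cycle_adj n) w"
  define Odd where "Odd = {(u, v). u < n \<and> v < n \<and> odd (u + v)}"
  define Even where "Even = {(u, v). u < n \<and> v < n \<and> u \<noteq> v \<and> even (u + v) \<and>
                                     w \<notin> cycle_midpoints n (int u + int v)}"
  have n0: "n > 0" and "even n" using n h by auto
  have T_eq: "T = Odd \<union> Even"
    using resolves_cycle_iff[OF n0 w] cycle_midpoints_odd_sum[OF \<open>even n\<close>]
    by (auto simp: T_def resolved_ordered_pairs_def Odd_def Even_def)
  have disjoint: "Odd \<inter> Even = {}" by (auto simp: Odd_def Even_def)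
  have fin: "finite Odd" "finite Even"
    by (rule finite_subset[of _ "{..<n} \<times> {..<n}"], auto simp: Odd_def Even_def)+
  have card_Odd: "real (card Odd) = real n * real h"
    using card_opposite_parity_pairs[of h] n by (simp add: Odd_def)
  have card_Even: "real (card Even) = real n * (real h - 2) + 2"
    unfolding Even_def by (rule card_same_parity_non_midpoint_pairs[OF n h w])
  have share: "resolving_share {0..<n} (cycle_adj n) w u v =
      (if odd (u + v) then 1 / real n else 1 / (real n - 2))" if "(u, v) \<in> T" for u v
    using that resolving_share_cycle_even[OF n _ w] h unfolding T_def resolved_ordered_pairs_def by auto
  have "(\<Sum>(u, v)\<in>Odd. resolving_share {0..<n} (cycle_adj n) w u v) = (\<Sum>_\<in>Odd. 1 / real n)"
    by (rule sum.cong) (auto simp: share T_eq Odd_def)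
  moreover have "(\<Sum>(u, v)\<in>Even. resolving_share {0..<n} (cycle_adj n) w u v) =
      (\<Sum>_\<in>Even. 1 / (real n - 2))"
    by (rule sum.cong) (auto simp: share T_eq Even_def)
  ultimately have "(\<Sum>(u, v)\<in>T. resolving_share {0..<n} (cycle_adj n) w u v) =
      real (card Odd) / real n + real (card Even) / (real n - 2)"
    unfolding T_eq using fin disjoint by (simp add: sum.union_disjoint)
  also have "\<dots> = real n - 1"
    using card_Odd card_Even n h by (simp add: field_simps)
  finally have sum: "(\<Sum>(u, v)\<in>T. resolving_share {0..<n} (cycle_adj n) w u v) = real n - 1" .
  have "real (card T) = (real n)\<^sup>2 - 2 * real n + 2"
    unfolding T_eq using fin disjoint card_Odd card_Even n
    by (simp add: card_Un_disjoint power2_eq_square algebra_simps)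
  then show ?thesis
    unfolding avg_resolving_share_eq[OF finite_atLeastLessThan] T_def[symmetric] sum by simp
qed

theorem theorem3p8:
  fixes n :: nat
  assumes "n \<ge> 3"
  shows "resolving_index {0..<n} (cycle_adj n) =
           (if even n then real n * (real n - 1) / ((real n)^2 - 2 * real n + 2)
            else real n / (real n - 1))"
proof (cases "even n")
  case True
  then obtain h where n: "n = 2 * h" by blast
  then have "h \<ge> 2" using assms by simp
  have "resolving_index {0..<n} (cycle_adj n) =
      (\<Sum>w\<in>{0..<n}. (real n - 1) / ((real n)\<^sup>2 - 2 * real n + 2))"
    unfolding resolving_index_def
    by (rule sum.cong) (auto simp: avg_resolving_share_cycle_even[OF n \<open>h \<ge> 2\<close>])
  then show ?thesis using True by simp
next
  case False
  have "resolving_index {0..<n} (cycle_adj n) = (\<Sum>w\<in>{0..<n}. 1 / (real n - 1))"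
    unfolding resolving_index_def
    by (rule sum.cong) (auto simp: avg_resolving_share_cycle_odd[OF False assms])
  then show ?thesis using False by simp
qed

end
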